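(* For every integer $k\ge 1$ there exists a $2$-connected (finite, simple) graph $G_k$ with pathwidth at least $k$ and cocircumference at most $2k$.
   Context: A bond of a graph $G$ is an inclusion-wise minimal set of edges $F$ such that $G-F$ has more connected components than $G$; the cocircumference is the maximum size of a bond. A path-decomposition of $G$ is a sequence $(X_0,\dots,X_s)$ of subsets of $V(G)$ such that for each vertex $x$ the indices $i$ with $x\in X_i$ form a non-empty interval, and each edge has both ends in some $X_i$; its width is $\max_i|X_i|-1$, and the pathwidth is the minimum width of a path-decomposition. *)

theory Defs
  imports Main
begin

definition simple_graph :: "'a set \<Rightarrow> 'a set set \<Rightarrow> bool" where
  "simple_graph V E \<longleftrightarrow> finite V \<and>
     (\<forall>e\<in>E. \<exists>u v. u \<in> V \<and> v \<in> V \<and> u \<noteq> v \<and> e = {u, v})"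

definition adj :: "'a set set \<Rightarrow> 'a \<Rightarrow> 'a \<Rightarrow> bool" where
  "adj E u v \<longleftrightarrow> {u, v} \<in> E"

definition reach :: "'a set \<Rightarrow> 'a set set \<Rightarrow> 'a \<Rightarrow> 'a \<Rightarrow> bool" where
  "reach V E u v \<longleftrightarrow> u \<in> V \<and> v \<in> V \<and> (adj E)\<^sup>*\<^sup>* u v"

definition components :: "'a set \<Rightarrow> 'a set set \<Rightarrow> 'a set set" where
  "components V E = V // {(u, v). reach V E u v}"

definition num_components :: "'a set \<Rightarrow> 'a set set \<Rightarrow> nat" where
  "num_components V E = card (components V E)"

definition connected_graph :: "'a set \<Rightarrow> 'a set set \<Rightarrow> bool" where
  "connected_graph V E \<longleftrightarrow> V \<noteq> {} \<and> (\<forall>u\<in>V. \<forall>v\<in>V. reach V E u v)"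

definition del_verts_E :: "'a set set \<Rightarrow> 'a set \<Rightarrow> 'a set set" where
  "del_verts_E E X = {e \<in> E. e \<inter> X = {}}"

definition two_connected :: "'a set \<Rightarrow> 'a set set \<Rightarrow> bool" where
  "two_connected V E \<longleftrightarrow> card V > 2 \<and>
     (\<forall>X \<subseteq> V. card X < 2 \<longrightarrow> connected_graph (V - X) (del_verts_E E X))"

definition separating :: "'a set \<Rightarrow> 'a set set \<Rightarrow> 'a set set \<Rightarrow> bool" where
  "separating V E F \<longleftrightarrow> F \<subseteq> E \<and> num_components V (E - F) > num_components V E"

definition bond :: "'a set \<Rightarrow> 'a set set \<Rightarrow> 'a set set \<Rightarrow> bool" where
  "bond V E F \<longleftrightarrow> separating V E F \<and> (\<forall>F' \<subset> F. \<not> separating V E F')"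

definition cocircumference :: "'a set \<Rightarrow> 'a set set \<Rightarrow> nat" where
  "cocircumference V E = Max (insert 0 {card F | F. bond V E F})"

definition path_decomp :: "'a set \<Rightarrow> 'a set set \<Rightarrow> 'a set list \<Rightarrow> bool" where
  "path_decomp V E Xs \<longleftrightarrow> Xs \<noteq> [] \<and> (\<forall>X\<in>set Xs. X \<subseteq> V) \<and>
     (\<forall>x\<in>V. (\<exists>i < length Xs. x \<in> Xs ! i) \<and>
        (\<forall>i j l. i \<le> l \<and> l \<le> j \<and> j < length Xs \<and> x \<in> Xs ! i \<and> x \<in> Xs ! j
            \<longrightarrow> x \<in> Xs ! l)) \<and>
     (\<forall>u v. {u, v} \<in> E \<longrightarrow> (\<exists>i < length Xs. u \<in> Xs ! i \<and> v \<in> Xs ! i))"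

definition pd_width :: "'a set list \<Rightarrow> nat" where
  "pd_width Xs = Max (card ` set Xs) - 1"

definition pathwidth :: "'a set \<Rightarrow> 'a set set \<Rightarrow> nat" where
  "pathwidth V E = (LEAST w. \<exists>Xs. path_decomp V E Xs \<and> pd_width Xs = w)"

end

theory Submission
  imports Defs
begin

text \<open>
  $G_k$ is the cycle $0, 1, \<dots>, 3^k - 1$ together with nested chords: for every level $i \<le> k - 2$
  and every block $[3m \<cdot> 3^i, (3m + 3) \<cdot> 3^i)$ of the ternary subdivision, a chord joins the last
  vertex of the first third of the block to the first vertex of its last third.

  The Hamiltonian cycle makes $G_k$ 2-connected. Any two of the three thirds of a block are
  connected together (adjacent thirds along the cycle, the outer thirds by the chord of the block),
  so by induction on $j$ every path-decomposition has a bag containing $j + 1$ vertices of a block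
  of size $3^j$: of three such bags, one for each third, the middle one in the decomposition order
  also meets the connected union of the two other thirds. For $j = k$ this gives width at least $k$.

  The chords do not cross. A bond is the set of edges between two connected sides, so the side
  avoiding vertex $0$ is an interval $[x, y]$ of the cycle. Its cut consists of two cycle edges and
  of chords spanning the gap after $x - 1$ or after $y$; at most one chord per level spans a given
  gap, so the bond has at most $2 + 2(k - 1) = 2k$ edges.
\<close>

lemma simple_graph_edge_in:
  assumes "simple_graph V E" "{p, q} \<in> E"
  shows "p \<in> V" "q \<in> V"
  using assms unfolding simple_graph_def by (metis doubleton_eq_iff)+

lemma simple_graph_finite_edges:
  assumes "simple_graph V E"
  shows "finite E"
proof -
  have "E \<subseteq> Pow V"
  proof
    fix e assume "e \<in> E"
    then obtain u v where "u \<in> V" "v \<in> V" "e = {u, v}" using assms unfolding simple_graph_def by blast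
    then show "e \<in> Pow V" by simp
  qed
  moreover have "finite V" using assms unfolding simple_graph_def by simp
  ultimately show ?thesis by (meson finite_Pow_iff finite_subset)
qed

lemma symp_adj: "symp (adj E)"
  by (auto intro: sympI simp: adj_def insert_commute)

lemma adj_rtranclp_sym: "(adj E)\<^sup>*\<^sup>* x y \<Longrightarrow> (adj E)\<^sup>*\<^sup>* y x"
  by (metis symp_adj symp_rtranclp sympD)

definition adj_within :: "'a set set \<Rightarrow> 'a set \<Rightarrow> 'a \<Rightarrow> 'a \<Rightarrow> bool" where
  "adj_within E W x y \<longleftrightarrow> {x, y} \<in> E \<and> x \<in> W \<and> y \<in> W"

definition connected_within :: "'a set set \<Rightarrow> 'a set \<Rightarrow> bool" where
  "connected_within E W \<longleftrightarrow> (\<forall>x\<in>W. \<forall>y\<in>W. (adj_within E W)\<^sup>*\<^sup>* x y)"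

definition edge_cut :: "'a set set \<Rightarrow> 'a set \<Rightarrow> 'a set set" where
  "edge_cut E T = {e \<in> E. \<exists>p q. e = {p, q} \<and> p \<in> T \<and> q \<notin> T}"

lemma symp_adj_within: "symp (adj_within E W)"
  by (auto intro: sympI simp: adj_within_def insert_commute)

lemma adj_within_rtranclp_sym: "(adj_within E W)\<^sup>*\<^sup>* x y \<Longrightarrow> (adj_within E W)\<^sup>*\<^sup>* y x"
  by (metis symp_adj_within symp_rtranclp sympD)

lemma simple_graph_adj_within: "simple_graph V E \<Longrightarrow> adj_within E V = adj E"
  unfolding adj_within_def adj_def using simple_graph_edge_in by fast

lemma adj_within_rtranclp_in:
  "(adj_within E W)\<^sup>*\<^sup>* v w \<Longrightarrow> v \<in> W \<Longrightarrow> w \<in> W"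
  by (induction rule: rtranclp_induct) (auto simp: adj_within_def)

lemma adj_within_rtranclp_mono:
  assumes "(adj_within E W)\<^sup>*\<^sup>* x y" "E \<subseteq> E'" "W \<subseteq> W'"
  shows "(adj_within E' W')\<^sup>*\<^sup>* x y"
proof -
  have "adj_within E W \<le> adj_within E' W'"
    using assms(2,3) by (auto simp: adj_within_def)
  then show ?thesis using assms(1) rtranclp_mono by blast
qed

lemma rtranclp_leaves_set:
  assumes "r\<^sup>*\<^sup>* x y" "P x" "\<not> P y"
  obtains p q where "r p q" "P p" "\<not> P q"
  using assms by (induction rule: rtranclp_induct) blast+

lemma connected_withinI:
  assumes "\<And>x. x \<in> W \<Longrightarrow> (adj_within E W)\<^sup>*\<^sup>* v x"
  shows "connected_within E W"
  unfolding connected_within_def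
proof (intro ballI)
  fix x y assume "x \<in> W" "y \<in> W"
  then show "(adj_within E W)\<^sup>*\<^sup>* x y"
    using assms adj_within_rtranclp_sym rtranclp_trans by metis
qed

lemma connected_within_reachable:
  assumes "E' \<subseteq> E"
  shows "connected_within E {w. (adj_within E' W)\<^sup>*\<^sup>* v w}" (is "connected_within E ?C")
proof (rule connected_withinI)
  fix x assume "x \<in> ?C"
  then have "(adj_within E' W)\<^sup>*\<^sup>* v x" by simp
  then show "(adj_within E ?C)\<^sup>*\<^sup>* v x"
  proof (induction rule: rtranclp_induct)
    case (step y z)
    have "(adj_within E' W)\<^sup>*\<^sup>* v z" using step.hyps by simp
    then have "adj_within E ?C y z"
      using step.hyps assms by (auto simp: adj_within_def)
    then show ?case using step.IH by simp
  qed simp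
qed

lemma connected_within_Un:
  assumes "connected_within E P" "connected_within E Q" "p \<in> P" "q \<in> Q" "{p, q} \<in> E"
  shows "connected_within E (P \<union> Q)"
proof (rule connected_withinI)
  fix x assume "x \<in> P \<union> Q"
  then show "(adj_within E (P \<union> Q))\<^sup>*\<^sup>* p x"
  proof
    assume "x \<in> P"
    then have "(adj_within E P)\<^sup>*\<^sup>* p x" using assms(1,3) unfolding connected_within_def by blast
    then show ?thesis by (rule adj_within_rtranclp_mono) auto
  next
    assume "x \<in> Q"
    then have "(adj_within E Q)\<^sup>*\<^sup>* q x" using assms(2,4) unfolding connected_within_def by blast
    then have "(adj_within E (P \<union> Q))\<^sup>*\<^sup>* q x" by (rule adj_within_rtranclp_mono) auto
    moreover have "adj_within E (P \<union> Q) p q" using assms(3-5) by (simp add: adj_within_def)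
    ultimately show ?thesis by (meson converse_rtranclp_into_rtranclp)
  qed
qed

lemma connected_graphI:
  assumes "h \<in> V" "\<And>u. u \<in> V \<Longrightarrow> (adj E)\<^sup>*\<^sup>* u h"
  shows "connected_graph V E"
proof -
  have "reach V E u v" if "u \<in> V" "v \<in> V" for u v
    using that assms(2) adj_rtranclp_sym rtranclp_trans unfolding reach_def by metis
  then show ?thesis using assms(1) unfolding connected_graph_def by blast
qed

lemma num_components_connected: "connected_graph V E \<Longrightarrow> num_components V E = 1"
proof -
  assume G: "connected_graph V E"
  then have "{(u, v). reach V E u v} = V \<times> V" unfolding connected_graph_def reach_def by auto
  moreover have "V // (V \<times> V) = {V}" using G unfolding connected_graph_def quotient_def by auto
  ultimately show ?thesis unfolding num_components_def components_def by simp
qed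

lemma num_components_ge_2:
  assumes "finite V" "u \<in> V" "v \<in> V" "\<not> (adj E)\<^sup>*\<^sup>* u v"
  shows "2 \<le> num_components V E"
proof -
  define R where "R = {(u, v). reach V E u v}"
  have classes: "R``{u} \<in> V // R" "R``{v} \<in> V // R" using assms(2,3) by (simp_all add: quotientI)
  have "\<not> (adj E)\<^sup>*\<^sup>* v u" using assms(4) adj_rtranclp_sym by metis
  then have "u \<notin> R``{v}" unfolding R_def reach_def by simp
  moreover have "u \<in> R``{u}" using assms(2) unfolding R_def reach_def by simp
  ultimately have distinct: "R``{u} \<noteq> R``{v}" by metis
  have "finite (V // R)"
    using assms(1) by (rule finite_quotient) (auto simp: R_def reach_def)
  then have "card {R``{u}, R``{v}} \<le> card (V // R)"
    using classes by (intro card_mono) auto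
  then show ?thesis using distinct unfolding num_components_def components_def R_def by simp
qed

lemma num_components_gt_1_unreachable:
  assumes "1 < num_components V E"
  obtains u v where "u \<in> V" "v \<in> V" "\<not> (adj E)\<^sup>*\<^sup>* u v"
proof -
  have "V \<noteq> {}" using assms by (auto simp: num_components_def components_def)
  moreover have "\<not> connected_graph V E" using assms num_components_connected by force
  ultimately show ?thesis using that unfolding connected_graph_def reach_def by blast
qed

lemma edge_cut_separating:
  assumes "finite V" "connected_graph V E" "T \<subseteq> V" "v \<in> T" "u \<in> V - T"
  shows "separating V E (edge_cut E T)"
proof -
  have stays: "w \<in> T" if "(adj (E - edge_cut E T))\<^sup>*\<^sup>* v w" for w
    using that
  proof (induction rule: rtranclp_induct)
    case (step y z)
    then show ?case unfolding adj_def edge_cut_def by blast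
  qed (use assms(4) in simp)
  have "2 \<le> num_components V (E - edge_cut E T)"
    using num_components_ge_2[OF assms(1), of v u] stays assms(3-5) by blast
  then show ?thesis
    using num_components_connected[OF assms(2)] unfolding separating_def edge_cut_def by auto
qed

lemma connected_within_complement:
  assumes "simple_graph V E" "connected_graph V E" "T \<subseteq> V"
    and "S \<subseteq> V - T" "u \<in> S" "connected_within E S"
    and leaves_to_S: "\<And>p q. {p, q} \<in> E \<Longrightarrow> p \<in> T \<Longrightarrow> q \<notin> T \<Longrightarrow> q \<in> S"
  shows "connected_within E (V - T)"
proof (rule connected_withinI)
  have "z \<in> T \<or> (adj_within E (V - T))\<^sup>*\<^sup>* z u" if "(adj E)\<^sup>*\<^sup>* z u" for z
    using that
  proof (induction rule: converse_rtranclp_induct)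
    case (step z z')
    then have e: "{z, z'} \<in> E" unfolding adj_def by simp
    consider "z \<in> T" | "z \<notin> T" "z' \<notin> T" | "z \<notin> T" "z' \<in> T" by blast
    then show ?case
    proof cases
      case 2
      then have "adj_within E (V - T) z z'"
        using e simple_graph_edge_in[OF assms(1)] unfolding adj_within_def by blast
      then show ?thesis using step.IH 2 by (meson converse_rtranclp_into_rtranclp)
    next
      case 3
      then have "z \<in> S" using leaves_to_S[of z' z] e by (simp add: insert_commute)
      then have "(adj_within E S)\<^sup>*\<^sup>* z u" using assms(5,6) unfolding connected_within_def by simp
      then have "(adj_within E (V - T))\<^sup>*\<^sup>* z u"
        using assms(4) by (rule adj_within_rtranclp_mono[OF _ order_refl])
      then show ?thesis ..
    qed simp
  qed simp
  moreover have "(adj E)\<^sup>*\<^sup>* z u" if "z \<in> V" for z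
    using assms(2,4,5) that unfolding connected_graph_def reach_def by auto
  ultimately show "(adj_within E (V - T))\<^sup>*\<^sup>* u z" if "z \<in> V - T" for z
    using that by (metis DiffE adj_within_rtranclp_sym)
qed

lemma bond_edge_cut:
  assumes G: "simple_graph V E" "connected_graph V E" and F: "bond V E F"
  obtains T where "T \<subseteq> V" "T \<noteq> {}" "V - T \<noteq> {}"
    "connected_within E T" "connected_within E (V - T)" "F = edge_cut E T"
proof -
  have fin: "finite V" using G(1) unfolding simple_graph_def by blast
  have "1 < num_components V (E - F)"
    using F num_components_connected[OF G(2)] unfolding bond_def separating_def by auto
  then obtain u v where uv: "u \<in> V" "v \<in> V" "\<not> (adj (E - F))\<^sup>*\<^sup>* u v"
    by (rule num_components_gt_1_unreachable)
  txt \<open>S is the component of u in G - F and T the component of v in G - S. Every edge leaving T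
    enters S and lies in F, so the cut of T is contained in F, and minimality of F forces equality.\<close>
  define S where "S = {w. (adj_within (E - F) V)\<^sup>*\<^sup>* u w}"
  define T where "T = {w. (adj_within E (V - S))\<^sup>*\<^sup>* v w}"
  have adj_EF: "adj_within (E - F) V = adj (E - F)"
    using G(1) by (intro simple_graph_adj_within) (auto simp: simple_graph_def)
  have "S \<subseteq> V" unfolding S_def using adj_within_rtranclp_in[OF _ uv(1)] by blast
  have "u \<in> S" "v \<notin> S" using uv(3) unfolding S_def adj_EF by simp_all
  then have "v \<in> T" "T \<subseteq> V - S"
    unfolding T_def using adj_within_rtranclp_in[of E "V - S" v] uv(2) by auto
  have leaves: "q \<in> S \<and> {p, q} \<in> F" if "{p, q} \<in> E" "p \<in> T" "q \<notin> T" for p q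
  proof -
    have "q \<in> V" "p \<in> V" using simple_graph_edge_in[OF G(1) that(1)] by auto
    have "(adj_within E (V - S))\<^sup>*\<^sup>* v p" using that(2) unfolding T_def by simp
    have "\<not> adj_within E (V - S) p q"
    proof
      assume "adj_within E (V - S) p q"
      with \<open>(adj_within E (V - S))\<^sup>*\<^sup>* v p\<close> have "q \<in> T" unfolding T_def by simp
      with that(3) show False by simp
    qed
    then have "q \<in> S" using that(1,2) \<open>q \<in> V\<close> \<open>T \<subseteq> V - S\<close> unfolding adj_within_def by auto
    moreover have "{p, q} \<in> F"
    proof (rule ccontr)
      assume "{p, q} \<notin> F"
      then have "adj_within (E - F) V q p"
        using that(1) \<open>p \<in> V\<close> \<open>q \<in> V\<close> unfolding adj_within_def by (simp add: insert_commute)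
      then have "p \<in> S" using \<open>q \<in> S\<close> unfolding S_def by simp
      then show False using \<open>p \<in> T\<close> \<open>T \<subseteq> V - S\<close> by blast
    qed
    ultimately show ?thesis ..
  qed
  have "T \<subseteq> V" "u \<notin> T" using \<open>T \<subseteq> V - S\<close> \<open>u \<in> S\<close> by auto
  have "edge_cut E T \<subseteq> F" using leaves unfolding edge_cut_def by auto
  moreover have "separating V E (edge_cut E T)"
    using edge_cut_separating[OF fin G(2) \<open>T \<subseteq> V\<close> \<open>v \<in> T\<close>] uv(1) \<open>u \<notin> T\<close> by simp
  ultimately have "F = edge_cut E T" using F unfolding bond_def by (metis psubsetI)
  moreover have "connected_within E T" unfolding T_def by (rule connected_within_reachable) simp
  moreover have "connected_within E (V - T)"
  proof (rule connected_within_complement[OF G \<open>T \<subseteq> V\<close> _ \<open>u \<in> S\<close>])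
    show "S \<subseteq> V - T" using \<open>S \<subseteq> V\<close> \<open>T \<subseteq> V - S\<close> by blast
    show "connected_within E S" unfolding S_def by (rule connected_within_reachable) blast
    show "q \<in> S" if "{p, q} \<in> E" "p \<in> T" "q \<notin> T" for p q using leaves[OF that] ..
  qed
  moreover have "T \<noteq> {}" "V - T \<noteq> {}" using \<open>v \<in> T\<close> \<open>u \<notin> T\<close> uv(1) by auto
  ultimately show ?thesis using that \<open>T \<subseteq> V\<close> by simp
qed

lemma edge_cut_Diff:
  assumes "simple_graph V E" "T \<subseteq> V"
  shows "edge_cut E (V - T) = edge_cut E T"
  unfolding edge_cut_def
proof (intro Collect_cong conj_cong refl)
  fix e assume "e \<in> E"
  then obtain a b where "e = {a, b}" "a \<in> V" "b \<in> V"
    using assms(1) unfolding simple_graph_def by blast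
  then show "(\<exists>p q. e = {p, q} \<and> p \<in> V - T \<and> q \<notin> V - T) \<longleftrightarrow>
             (\<exists>p q. e = {p, q} \<and> p \<in> T \<and> q \<notin> T)"
    using assms(2) by (auto simp: doubleton_eq_iff)
qed

lemma cocircumference_le:
  assumes "simple_graph V E" "\<And>F. bond V E F \<Longrightarrow> card F \<le> n"
  shows "cocircumference V E \<le> n"
proof -
  have "{card F | F. bond V E F} \<subseteq> card ` Pow E"
    unfolding bond_def separating_def by auto
  then have "finite {card F | F. bond V E F}"
    using simple_graph_finite_edges[OF assms(1)] finite_subset by blast
  then show ?thesis
    unfolding cocircumference_def using assms(2) by (simp add: Max_le_iff) blast
qed

section \<open>Non-crossing edge sets on an ordered vertex set\<close>

definition non_crossing :: "nat set set \<Rightarrow> bool" where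
  "non_crossing E \<longleftrightarrow> \<not> (\<exists>a b c d. {a, b} \<in> E \<and> {c, d} \<in> E \<and> a < c \<and> c < b \<and> b < d)"

lemma non_crossing_connected_within_inside:
  assumes nc: "non_crossing E" and e: "{lo, hi} \<in> E" "lo < hi" and P: "connected_within E P"
    and "lo \<notin> P" "hi \<notin> P" "x \<in> P" "y \<in> P" "lo < x" "x < hi"
  shows "lo < y \<and> y < hi"
proof (rule ccontr)
  let ?inside = "\<lambda>z. lo < z \<and> z < hi"
  assume "\<not> ?inside y"
  have "(adj_within E P)\<^sup>*\<^sup>* x y" using P assms(7,8) unfolding connected_within_def by blast
  moreover have "?inside x" using assms(9,10) ..
  ultimately obtain p q where pq: "adj_within E P p q" "?inside p" "\<not> ?inside q"
    using \<open>\<not> ?inside y\<close> by (rule rtranclp_leaves_set[where P = ?inside])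
  then have "{p, q} \<in> E" "{q, p} \<in> E" "q \<in> P"
    unfolding adj_within_def by (auto simp: insert_commute)
  then have "q \<noteq> lo" "q \<noteq> hi" using assms(5,6) by auto
  then have "q < lo \<or> hi < q" using pq(3) by linarith
  then show False
  proof
    assume "q < lo"
    then have "q < lo \<and> lo < p \<and> p < hi" using pq(2) by simp
    then show False using nc e(1) \<open>{q, p} \<in> E\<close> unfolding non_crossing_def by blast
  next
    assume "hi < q"
    then have "lo < p \<and> p < hi \<and> hi < q" using pq(2) by simp
    then show False using nc e(1) \<open>{p, q} \<in> E\<close> unfolding non_crossing_def by blast
  qed
qed

lemma non_crossing_not_interleaved:
  assumes nc: "non_crossing E" and "a < b" "b < c" "c < d"
    and P: "connected_within E P" and Q: "connected_within E Q" and "P \<inter> Q = {}"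
    and "a \<in> P" "c \<in> P" "b \<in> Q" "d \<in> Q"
  shows False
proof -
  let ?outside = "\<lambda>z. \<not> (b < z \<and> z < d)"
  have "(adj_within E P)\<^sup>*\<^sup>* a c" using P assms(8,9) unfolding connected_within_def by blast
  moreover have "?outside a" "\<not> ?outside c" using assms(2-4) by simp_all
  ultimately obtain p q where pq: "adj_within E P p q" "?outside p" "\<not> ?outside q"
    by (rule rtranclp_leaves_set[where P = ?outside])
  then have "{p, q} \<in> E" "{q, p} \<in> E" "p \<notin> Q" "q \<notin> Q"
    using assms(7) unfolding adj_within_def by (auto simp: insert_commute)
  then have "p \<noteq> b" "p \<noteq> d" using assms(10,11) by auto
  then have "p < b \<or> d < p" using pq(2) by linarith
  then show False
  proof
    assume "p < b"
    then show False
      using non_crossing_connected_within_inside[OF nc \<open>{p, q} \<in> E\<close> _ Q \<open>p \<notin> Q\<close> \<open>q \<notin> Q\<close>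
          \<open>b \<in> Q\<close> \<open>d \<in> Q\<close>] pq(3) by linarith
  next
    assume "d < p"
    then show False
      using non_crossing_connected_within_inside[OF nc \<open>{q, p} \<in> E\<close> _ Q \<open>q \<notin> Q\<close> \<open>p \<notin> Q\<close>
          \<open>d \<in> Q\<close> \<open>b \<in> Q\<close>] pq(3) by linarith
  qed
qed

lemma non_crossing_side_interval:
  assumes nc: "non_crossing E" and A: "connected_within E A" "connected_within E ({..<n} - A)"
    and "A \<subseteq> {..<n}" "0 \<notin> A" "A \<noteq> {}"
  obtains x y where "A = {x..y}" "1 \<le> x" "x \<le> y" "y < n"
proof -
  have "finite A" using assms(4) finite_subset by blast
  define x where "x = Min A"
  define y where "y = Max A"
  have "x \<in> A" "y \<in> A" unfolding x_def y_def using \<open>finite A\<close> assms(6) by auto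
  have bounds: "x \<le> z \<and> z \<le> y" if "z \<in> A" for z
    unfolding x_def y_def using \<open>finite A\<close> that by auto
  have "{x..y} \<subseteq> A"
  proof
    fix w assume w: "w \<in> {x..y}"
    show "w \<in> A"
    proof (rule ccontr)
      assume "w \<notin> A"
      then have "0 < x" "x < w" "w < y" using w \<open>x \<in> A\<close> \<open>y \<in> A\<close> assms(5)
        by (auto simp: order.order_iff_strict intro: gr0I)
      moreover have "0 \<in> {..<n} - A" "w \<in> {..<n} - A"
        using assms(4,5) \<open>w \<notin> A\<close> \<open>y \<in> A\<close> \<open>w < y\<close> by auto
      ultimately show False
        using non_crossing_not_interleaved[OF nc _ _ _ A(2) A(1) _ _ _ \<open>x \<in> A\<close> \<open>y \<in> A\<close>] by blast
    qed
  qed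
  then have "A = {x..y}" using bounds by auto
  moreover have "1 \<le> x" "y < n" using \<open>x \<in> A\<close> \<open>y \<in> A\<close> assms(4,5) by (auto intro: Suc_leI gr0I)
  ultimately show ?thesis using that bounds \<open>x \<in> A\<close> by blast
qed

section \<open>Path-decompositions\<close>

definition between :: "nat \<Rightarrow> nat \<Rightarrow> nat \<Rightarrow> bool" where
  "between i l j \<longleftrightarrow> (i \<le> l \<and> l \<le> j) \<or> (j \<le> l \<and> l \<le> i)"

lemma between_cases: "between a b c \<or> between b a c \<or> between a c b"
  unfolding between_def by linarith

lemma path_decomp_between:
  assumes "path_decomp V E Xs" "x \<in> V" "i < length Xs" "j < length Xs"
    "x \<in> Xs ! i" "x \<in> Xs ! j" "between i l j"
  shows "x \<in> Xs ! l"
  using assms unfolding path_decomp_def between_def by blast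

lemma path_decomp_edge:
  assumes "path_decomp V E Xs" "{u, v} \<in> E"
  obtains i where "i < length Xs" "u \<in> Xs ! i" "v \<in> Xs ! i"
  using assms unfolding path_decomp_def by blast

lemma path_decomp_connected_within_meets_bag:
  assumes pd: "path_decomp V E Xs" and "C \<subseteq> V" "connected_within E C"
    and "x \<in> C" "i < length Xs" "x \<in> Xs ! i" and "y \<in> C" "j < length Xs" "y \<in> Xs ! j"
    and "between i l j"
  obtains z where "z \<in> C" "z \<in> Xs ! l"
proof -
  have "(adj_within E C)\<^sup>*\<^sup>* x y" using assms(3,4,7) unfolding connected_within_def by blast
  then have "\<exists>z\<in>C. z \<in> Xs ! l" using assms(8-10)
  proof (induction arbitrary: j rule: rtranclp_induct)
    case base
    then show ?case
      using path_decomp_between[OF pd _ assms(5) base(1) assms(6) base(2,3)] assms(2,4) by blast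
  next
    case (step y' y)
    then have e: "{y', y} \<in> E" "y \<in> C" unfolding adj_within_def by auto
    obtain j' where j': "j' < length Xs" "y' \<in> Xs ! j'" "y \<in> Xs ! j'"
      using pd e(1) by (rule path_decomp_edge)
    show ?case
    proof (cases "between i l j'")
      case True
      then show ?thesis using step.IH j' by blast
    next
      case False
      then have "between j' l j" using step.prems(3) unfolding between_def by linarith
      then have "y \<in> Xs ! l"
        using path_decomp_between[OF pd _ j'(1) step.prems(1) j'(3) step.prems(2)] e(2) assms(2)
        by blast
      then show ?thesis using e(2) by blast
    qed
  qed
  then show ?thesis using that by blast
qed

lemma path_decomp_bag_extra_vertex:
  assumes pd: "path_decomp V E Xs" and "C \<subseteq> V" "connected_within E C" "finite (Q \<union> C)"
    "Q \<inter> C = {}"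
    and "x \<in> C" "i < length Xs" "x \<in> Xs ! i" and "y \<in> C" "j < length Xs" "y \<in> Xs ! j"
    and "between i l j" "n \<le> card (Xs ! l \<inter> Q)"
  shows "Suc n \<le> card (Xs ! l \<inter> (Q \<union> C))"
proof -
  obtain z where "z \<in> C" "z \<in> Xs ! l"
    using path_decomp_connected_within_meets_bag[OF assms(1-3,6-12)] .
  then have "insert z (Xs ! l \<inter> Q) \<subseteq> Xs ! l \<inter> (Q \<union> C)" "z \<notin> Xs ! l \<inter> Q"
    using assms(5) by auto
  moreover have "finite (Xs ! l \<inter> (Q \<union> C))" using assms(4) by simp
  ultimately have "card (insert z (Xs ! l \<inter> Q)) \<le> card (Xs ! l \<inter> (Q \<union> C))"
    by (intro card_mono)
  moreover have "finite (Xs ! l \<inter> Q)" using assms(4) by simp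
  ultimately have "Suc (card (Xs ! l \<inter> Q)) \<le> card (Xs ! l \<inter> (Q \<union> C))"
    using \<open>z \<notin> Xs ! l \<inter> Q\<close> by simp
  then show ?thesis using assms(13) by simp
qed

lemma path_decomp_three_parts:
  assumes pd: "path_decomp V E Xs" and "B1 \<union> B2 \<union> B3 \<subseteq> V" "finite (B1 \<union> B2 \<union> B3)"
    and "B1 \<inter> B2 = {}" "B1 \<inter> B3 = {}" "B2 \<inter> B3 = {}"
    and "connected_within E (B1 \<union> B2)" "connected_within E (B2 \<union> B3)"
      "connected_within E (B1 \<union> B3)"
    and "i1 < length Xs" "Suc n \<le> card (Xs ! i1 \<inter> B1)"
    and "i2 < length Xs" "Suc n \<le> card (Xs ! i2 \<inter> B2)"
    and "i3 < length Xs" "Suc n \<le> card (Xs ! i3 \<inter> B3)"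
  shows "\<exists>i < length Xs. Suc (Suc n) \<le> card (Xs ! i \<inter> (B1 \<union> B2 \<union> B3))"
proof -
  have nonempty: "Xs ! i \<inter> B \<noteq> {}" if "Suc n \<le> card (Xs ! i \<inter> B)" for i B
    using that by auto
  obtain x1 x2 x3 where x: "x1 \<in> Xs ! i1" "x1 \<in> B1" "x2 \<in> Xs ! i2" "x2 \<in> B2"
    "x3 \<in> Xs ! i3" "x3 \<in> B3"
    using nonempty[OF assms(11)] nonempty[OF assms(13)] nonempty[OF assms(15)] by blast
  have fin: "finite (Q \<union> C)" if "Q \<union> C = B1 \<union> B2 \<union> B3" for Q C
    using assms(3) that by simp
  consider "between i1 i2 i3" | "between i2 i1 i3" | "between i1 i3 i2"
    using between_cases by blast
  then show ?thesis
  proof cases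
    case 1
    have "Suc (Suc n) \<le> card (Xs ! i2 \<inter> (B2 \<union> (B1 \<union> B3)))"
      by (rule path_decomp_bag_extra_vertex
          [OF pd _ assms(9) fin _ _ assms(10) x(1) _ assms(14) x(5) 1 assms(13)])
        (use assms(2-6) x in \<open>blast+\<close>)
    moreover have "B2 \<union> (B1 \<union> B3) = B1 \<union> B2 \<union> B3" by blast
    ultimately show ?thesis using assms(12) by auto
  next
    case 2
    have "Suc (Suc n) \<le> card (Xs ! i1 \<inter> (B1 \<union> (B2 \<union> B3)))"
      by (rule path_decomp_bag_extra_vertex
          [OF pd _ assms(8) fin _ _ assms(12) x(3) _ assms(14) x(5) 2 assms(11)])
        (use assms(2-6) x in \<open>blast+\<close>)
    moreover have "B1 \<union> (B2 \<union> B3) = B1 \<union> B2 \<union> B3" by blast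
    ultimately show ?thesis using assms(10) by auto
  next
    case 3
    have "Suc (Suc n) \<le> card (Xs ! i3 \<inter> (B3 \<union> (B1 \<union> B2)))"
      by (rule path_decomp_bag_extra_vertex
          [OF pd _ assms(7) fin _ _ assms(10) x(1) _ assms(12) x(3) 3 assms(15)])
        (use assms(2-6) x in \<open>blast+\<close>)
    moreover have "B3 \<union> (B1 \<union> B2) = B1 \<union> B2 \<union> B3" by blast
    ultimately show ?thesis using assms(14) by auto
  qed
qed

lemma pathwidth_geI:
  assumes "simple_graph V E"
    and "\<And>Xs. path_decomp V E Xs \<Longrightarrow> \<exists>X\<in>set Xs. Suc k \<le> card X"
  shows "k \<le> pathwidth V E"
proof -
  have "path_decomp V E [V]"
    using simple_graph_edge_in[OF assms(1)] unfolding path_decomp_def by auto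
  then have ex: "\<exists>w Xs. path_decomp V E Xs \<and> pd_width Xs = w" by blast
  show ?thesis unfolding pathwidth_def
  proof (rule LeastI2_ex[OF ex], elim exE conjE)
    fix w Xs assume "path_decomp V E Xs" "pd_width Xs = w"
    then obtain X where "X \<in> set Xs" "Suc k \<le> card X" using assms(2) by blast
    then have "Suc k \<le> Max (card ` set Xs)"
      by (meson List.finite_set Max_ge finite_imageI image_eqI order_trans)
    then show "k \<le> w" using \<open>pd_width Xs = w\<close> unfolding pd_width_def by linarith
  qed
qed

definition cycle_edges :: "nat \<Rightarrow> nat set set" where
  "cycle_edges n = insert {0, n - 1} {{i, Suc i} | i. Suc i < n}"

lemma cycle_edge_Suc: "Suc i < n \<Longrightarrow> {i, Suc i} \<in> cycle_edges n"
  unfolding cycle_edges_def by blast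

lemma cycle_edge_last: "{0, n - 1} \<in> cycle_edges n"
  unfolding cycle_edges_def by blast

lemma rtranclp_consecutive:
  assumes "\<And>i. lo \<le> i \<Longrightarrow> i < z \<Longrightarrow> r i (Suc i)" "lo \<le> z"
  shows "r\<^sup>*\<^sup>* lo z"
  using assms
proof (induction z)
  case (Suc z)
  then show ?case
    by (cases "lo = Suc z") (auto intro: rtranclp.rtrancl_into_rtrancl)
qed simp

lemma cycle_walk_avoiding:
  assumes "cycle_edges n \<subseteq> E" "lo \<le> z" "z < n"
    and "\<And>i. lo \<le> i \<Longrightarrow> i \<le> z \<Longrightarrow> i \<notin> X"
  shows "(adj (del_verts_E E X))\<^sup>*\<^sup>* lo z"
proof (rule rtranclp_consecutive[OF _ assms(2)])
  fix i assume "lo \<le> i" "i < z"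
  then show "adj (del_verts_E E X) i (Suc i)"
    using assms cycle_edge_Suc[of i n] unfolding adj_def del_verts_E_def by auto
qed

lemma two_connected_cycle_supergraph:
  assumes "3 \<le> n" "cycle_edges n \<subseteq> E"
  shows "two_connected {..<n} E"
  unfolding two_connected_def
proof (intro conjI allI impI)
  show "2 < card {..<n}" using assms(1) by simp
  fix X assume X: "X \<subseteq> {..<n}" "card X < 2"
  let ?E = "del_verts_E E X"
  have "finite X" using X(1) finite_subset by blast
  obtain w where "X \<subseteq> {w}"
  proof (cases "card X")
    case 0
    then show ?thesis using that \<open>finite X\<close> by simp
  next
    case (Suc m)
    then have "card X = 1" using X(2) by simp
    then show ?thesis using that by (metis card_1_singletonE order_refl)
  qed
  txt \<open>Every remaining vertex reaches the hub 0 (or 1 if 0 is deleted) along the cycle, if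
    necessary around the closing edge to avoid the deleted vertex.\<close>
  let ?h = "if 0 \<in> X then 1 else 0"
  have hub: "(adj ?E)\<^sup>*\<^sup>* u ?h" if u: "u \<in> {..<n} - X" for u
  proof (cases "0 \<in> X \<or> u < w \<or> w \<notin> X")
    case True
    have "(adj ?E)\<^sup>*\<^sup>* ?h u"
      by (rule cycle_walk_avoiding[OF assms(2)])
        (use True u \<open>X \<subseteq> {w}\<close>[unfolded subset_singleton_iff] in auto)
    then show ?thesis by (rule adj_rtranclp_sym)
  next
    case False
    then have "w \<in> X" "0 \<notin> X" "\<not> u < w" by simp_all
    moreover have "w \<noteq> 0" "w \<noteq> u" using calculation u by (metis DiffD2)+
    ultimately have "X = {w}" "0 < w" "w < u" using \<open>X \<subseteq> {w}\<close> by auto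
    have "(adj ?E)\<^sup>*\<^sup>* u (n - 1)"
      by (rule cycle_walk_avoiding[OF assms(2)]) (use u \<open>w < u\<close> \<open>X = {w}\<close> in auto)
    moreover have "adj ?E (n - 1) 0"
      using cycle_edge_last[of n] assms(2) \<open>0 < w\<close> \<open>w < u\<close> u \<open>X = {w}\<close>
      unfolding adj_def del_verts_E_def by (auto simp: insert_commute)
    ultimately show ?thesis using \<open>0 < w\<close> \<open>X = {w}\<close> by simp
  qed
  have "?h \<in> {..<n} - X" using assms(1) \<open>X \<subseteq> {w}\<close> by auto
  then show "connected_graph ({..<n} - X) ?E" using hub by (rule connected_graphI)
qed

lemma two_connected_imp_connected:
  assumes "two_connected V E"
  shows "connected_graph V E"
proof -
  have "\<forall>X\<subseteq>V. card X < 2 \<longrightarrow> connected_graph (V - X) (del_verts_E E X)"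
    using assms unfolding two_connected_def by simp
  from this[rule_format, of "{}"] have "connected_graph V (del_verts_E E {})" by simp
  moreover have "del_verts_E E {} = E" unfolding del_verts_E_def by simp
  ultimately show ?thesis by simp
qed

lemma connected_within_interval:
  assumes "cycle_edges n \<subseteq> E" "hi \<le> n"
  shows "connected_within E {lo..<hi}"
proof (rule connected_withinI)
  fix x assume x: "x \<in> {lo..<hi}"
  show "(adj_within E {lo..<hi})\<^sup>*\<^sup>* lo x"
  proof (rule rtranclp_consecutive)
    fix i assume "lo \<le> i" "i < x"
    then show "adj_within E {lo..<hi} i (Suc i)"
      using x assms cycle_edge_Suc[of i n] unfolding adj_within_def by auto
  qed (use x in simp)
qed

definition chord :: "nat \<Rightarrow> nat \<Rightarrow> nat set" where
  "chord i m = {(3 * m + 1) * 3 ^ i - 1, (3 * m + 2) * 3 ^ i}"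

definition chords :: "nat \<Rightarrow> nat set set" where
  "chords k = {chord i m | i m. i + 2 \<le> k \<and> (3 * m + 3) * 3 ^ i \<le> 3 ^ k}"

definition Gk_edges :: "nat \<Rightarrow> nat set set" where
  "Gk_edges k = cycle_edges (3 ^ k) \<union> chords k"

lemma chord_ends_less: "(3 * m + 1) * 3 ^ i - 1 < (3 * m + 2) * (3::nat) ^ i"
proof -
  have "0 < t \<Longrightarrow> (3 * m + 1) * t - 1 < (3 * m + 2) * (t::nat)" for t
    by (simp add: algebra_simps)
  then show ?thesis by simp
qed

lemma chord_upper_less:
  assumes "(3 * m + 3) * 3 ^ i \<le> (3::nat) ^ k"
  shows "(3 * m + 2) * 3 ^ i < (3::nat) ^ k"
proof -
  have "(0::nat) < 3 ^ i" by simp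
  then have "(3 * m + 2) * (3::nat) ^ i < (3 * m + 3) * 3 ^ i" by (simp add: algebra_simps)
  then show ?thesis using assms by linarith
qed

lemma chord_eq_iff:
  "chord i m = {a, b} \<and> a < b \<longleftrightarrow> a = (3 * m + 1) * 3 ^ i - 1 \<and> b = (3 * m + 2) * 3 ^ i"
  using chord_ends_less[of m i] unfolding chord_def doubleton_eq_iff by auto

lemma Gk_edge_cases:
  assumes "{a, b} \<in> Gk_edges k" "a < b"
  obtains "b = Suc a" | "a = 0" "b = 3 ^ k - 1"
  | i m where "i + 2 \<le> k" "(3 * m + 3) * 3 ^ i \<le> (3::nat) ^ k"
      "a = (3 * m + 1) * 3 ^ i - 1" "b = (3 * m + 2) * 3 ^ i"
proof -
  consider "{a, b} \<in> cycle_edges (3 ^ k)" | "{a, b} \<in> chords k"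
    using assms(1) unfolding Gk_edges_def by blast
  then show ?thesis
  proof cases
    case 1
    then show ?thesis
      using that(1,2) assms(2) unfolding cycle_edges_def by (auto simp: doubleton_eq_iff)
  next
    case 2
    then obtain i m where "i + 2 \<le> k" "(3 * m + 3) * 3 ^ i \<le> (3::nat) ^ k" "chord i m = {a, b}"
      unfolding chords_def by auto
    then show ?thesis using that(3) assms(2) chord_eq_iff by blast
  qed
qed

lemma Gk_edge_bounds:
  assumes "e \<in> Gk_edges k" "1 \<le> k"
  obtains a b where "e = {a, b}" "a < b" "b < 3 ^ k"
proof -
  have "3 \<le> (3::nat) ^ k" using self_le_power[of 3 k] assms(2) by simp
  consider i where "e = {i, Suc i}" "Suc i < 3 ^ k" | "e = {0, 3 ^ k - 1}"
    | i m where "(3 * m + 3) * 3 ^ i \<le> (3::nat) ^ k" "e = chord i m"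
    using assms(1) unfolding Gk_edges_def cycle_edges_def chords_def by blast
  then show ?thesis
  proof cases
    case 2
    then show ?thesis using that \<open>3 \<le> 3 ^ k\<close> by simp
  next
    case (3 i m)
    then have "e = {(3 * m + 1) * 3 ^ i - 1, (3 * m + 2) * 3 ^ i}" unfolding chord_def by simp
    then show ?thesis using that chord_ends_less chord_upper_less[OF 3(1)] by blast
  qed (use that in blast)
qed

lemma simple_graph_Gk: "1 \<le> k \<Longrightarrow> simple_graph {..<3 ^ k} (Gk_edges k)"
  unfolding simple_graph_def
proof (intro conjI ballI finite_lessThan)
  fix e assume "1 \<le> k" "e \<in> Gk_edges k"
  then obtain a b where "e = {a, b}" "a < b" "b < 3 ^ k" using Gk_edge_bounds by blast
  then show "\<exists>u v. u \<in> {..<3 ^ k} \<and> v \<in> {..<3 ^ k} \<and> u \<noteq> v \<and> e = {u, v}"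
    by (intro exI[of _ a] exI[of _ b]) simp
qed

lemma power_3_mult_neq:
  "(3::nat) ^ p * (3 * a + 1) \<noteq> 3 * b + 2" "(3::nat) ^ p * (3 * a + 2) \<noteq> 3 * b + 1"
  by (cases p; simp; presburger)+

lemma chords_not_crossing:
  assumes "(3 * m1 + 1) * 3 ^ i1 - 1 < (3 * m2 + 1) * 3 ^ i2 - (1::nat)"
    and "(3 * m2 + 1) * 3 ^ i2 - 1 < (3 * m1 + 2) * (3::nat) ^ i1"
    and "(3 * m1 + 2) * 3 ^ i1 < (3 * m2 + 2) * (3::nat) ^ i2"
  shows False
proof -
  define t1 t2 :: nat where "t1 = 3 ^ i1" and "t2 = 3 ^ i2"
  have "0 < t1" "0 < t2" unfolding t1_def t2_def by simp_all
  then have "0 < (3 * m1 + 1) * t1" "0 < (3 * m2 + 1) * t2" by simp_all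
  then have A: "(3 * m1 + 1) * t1 < (3 * m2 + 1) * t2" "(3 * m2 + 1) * t2 \<le> (3 * m1 + 2) * t1"
    and B: "(3 * m1 + 2) * t1 < (3 * m2 + 2) * t2"
    using assms unfolding t1_def[symmetric] t2_def[symmetric] by linarith+
  show False
  proof (cases "i1 \<le> i2")
    case True
    define P :: nat where "P = 3 ^ (i2 - i1)"
    have "t2 = P * t1" unfolding P_def t1_def t2_def using True by (simp flip: power_add)
    then have "(3 * m2 + 1) * t2 = (P * (3 * m2 + 1)) * t1" by (simp add: algebra_simps)
    then have "3 * m1 + 1 < P * (3 * m2 + 1)" "P * (3 * m2 + 1) \<le> 3 * m1 + 2"
      using A \<open>0 < t1\<close> by (metis mult_less_cancel2 mult_le_cancel2)+
    then have "P * (3 * m2 + 1) = 3 * m1 + 2" by linarith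
    then show False using power_3_mult_neq(1) unfolding P_def by blast
  next
    case False
    define P :: nat where "P = 3 ^ (i1 - i2)"
    have "t1 = P * t2" unfolding P_def t1_def t2_def using False by (simp flip: power_add)
    then have "(3 * m1 + 2) * t1 = (P * (3 * m1 + 2)) * t2" by (simp add: algebra_simps)
    then have "3 * m2 + 1 \<le> P * (3 * m1 + 2)" "P * (3 * m1 + 2) < 3 * m2 + 2"
      using A(2) B \<open>0 < t2\<close> by (metis mult_less_cancel2 mult_le_cancel2)+
    then have "P * (3 * m1 + 2) = 3 * m2 + 1" by linarith
    then show False using power_3_mult_neq(2) unfolding P_def by blast
  qed
qed

lemma non_crossing_Gk:
  assumes "1 \<le> k"
  shows "non_crossing (Gk_edges k)"
  unfolding non_crossing_def
proof (intro notI, elim exE conjE)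
  fix a b c d assume ab: "{a, b} \<in> Gk_edges k" and cd: "{c, d} \<in> Gk_edges k"
    and "a < c" "c < b" "b < d"
  obtain x y where "{c, d} = {x, y}" "x < y" "y < 3 ^ k" using Gk_edge_bounds[OF cd assms] .
  then have "d < 3 ^ k" using \<open>c < b\<close> \<open>b < d\<close> by (auto simp: doubleton_eq_iff)
  obtain i1 m1 where "a = (3 * m1 + 1) * 3 ^ i1 - 1" "b = (3 * m1 + 2) * 3 ^ i1"
  proof (rule Gk_edge_cases[OF ab])
    show "a < b" using \<open>a < c\<close> \<open>c < b\<close> by simp
  qed (use that \<open>a < c\<close> \<open>c < b\<close> \<open>b < d\<close> \<open>d < 3 ^ k\<close> in auto)
  moreover obtain i2 m2 where "c = (3 * m2 + 1) * 3 ^ i2 - 1" "d = (3 * m2 + 2) * 3 ^ i2"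
  proof (rule Gk_edge_cases[OF cd])
    show "c < d" using \<open>c < b\<close> \<open>b < d\<close> by simp
  qed (use that \<open>a < c\<close> \<open>c < b\<close> \<open>b < d\<close> in auto)
  ultimately show False using chords_not_crossing[of m1 i1 m2 i2] \<open>a < c\<close> \<open>c < b\<close> \<open>b < d\<close> by simp
qed

lemma two_connected_Gk: "1 \<le> k \<Longrightarrow> two_connected {..<3 ^ k} (Gk_edges k)"
  using self_le_power[of 3 k] by (intro two_connected_cycle_supergraph) (auto simp: Gk_edges_def)

section \<open>Cocircumference of $G_k$\<close>

definition spanning_chords :: "nat \<Rightarrow> nat \<Rightarrow> nat set set" where
  "spanning_chords k g = {c \<in> chords k. \<exists>a b. c = {a, b} \<and> a \<le> g \<and> g < b}"

lemma chord_level_index: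
  assumes "0 < (t::nat)" "(3 * m + 1) * t - 1 \<le> g" "g < (3 * m + 2) * t"
  shows "g div t div 3 = m"
proof -
  have "g div t div 3 = g div (t * 3)" by (simp add: div_mult2_eq)
  also have "\<dots> = m"
  proof (rule div_nat_eqI)
    show "t * 3 * m \<le> g" using assms(1,2) by (simp add: algebra_simps)
    have "(3 * m + 2) * t \<le> t * 3 * Suc m" by (simp add: algebra_simps)
    then show "g < t * 3 * Suc m" using assms(3) by linarith
  qed
  finally show ?thesis .
qed

text \<open>At each level i at most one chord spans the gap after g, namely the one of the block
  containing g.\<close>
lemma spanning_chords_subset:
  "spanning_chords k g \<subseteq> (\<lambda>i. chord i (g div 3 ^ i div 3)) ` {..<k - 1}"
proof
  fix c assume "c \<in> spanning_chords k g"
  then obtain i m a b where "i + 2 \<le> k" "c = chord i m" "c = {a, b}" "a \<le> g" "g < b"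
    unfolding spanning_chords_def chords_def by blast
  moreover have "a = (3 * m + 1) * 3 ^ i - 1 \<and> b = (3 * m + 2) * 3 ^ i"
    using chord_eq_iff calculation by (metis order.strict_trans1)
  ultimately have "g div 3 ^ i div 3 = m" "i \<in> {..<k - 1}"
    using chord_level_index[of "3 ^ i" m g] by auto
  then show "c \<in> (\<lambda>i. chord i (g div 3 ^ i div 3)) ` {..<k - 1}"
    using \<open>c = chord i m\<close> by blast
qed

lemma finite_spanning_chords: "finite (spanning_chords k g)"
  using spanning_chords_subset by (rule finite_subset) simp

lemma card_spanning_chords: "card (spanning_chords k g) \<le> k - 1"
proof -
  have "card (spanning_chords k g) \<le> card ((\<lambda>i. chord i (g div 3 ^ i div 3)) ` {..<k - 1})"
    by (rule card_mono[OF _ spanning_chords_subset]) simp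
  also have "\<dots> \<le> k - 1" using card_image_le[of "{..<k - 1}"] by simp
  finally show ?thesis .
qed

lemma edge_cut_interval_subset:
  assumes "1 \<le> k" "1 \<le> x" "x \<le> y" "y < 3 ^ k"
  defines "R \<equiv> if y = 3 ^ k - 1 then {0, 3 ^ k - 1} else {y, Suc y}"
  shows "edge_cut (Gk_edges k) {x..y}
    \<subseteq> {{x - 1, x}, R} \<union> spanning_chords k (x - 1) \<union> spanning_chords k y"
proof
  fix e assume "e \<in> edge_cut (Gk_edges k) {x..y}"
  then obtain p q where "e \<in> Gk_edges k" "e = {p, q}" "p \<in> {x..y}" "q \<notin> {x..y}"
    unfolding edge_cut_def by blast
  obtain a b where "e = {a, b}" "a < b" "b < 3 ^ k"
    using Gk_edge_bounds[OF \<open>e \<in> Gk_edges k\<close> assms(1)] .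
  have ab: "{a, b} \<in> Gk_edges k" "a < b" using \<open>e \<in> Gk_edges k\<close> \<open>e = {a, b}\<close> \<open>a < b\<close> by simp_all
  have crossing: "(a \<in> {x..y} \<and> b \<notin> {x..y}) \<or> (a \<notin> {x..y} \<and> b \<in> {x..y})"
    using \<open>e = {p, q}\<close> \<open>e = {a, b}\<close> \<open>p \<in> {x..y}\<close> \<open>q \<notin> {x..y}\<close> by (auto simp: doubleton_eq_iff)
  show "e \<in> {{x - 1, x}, R} \<union> spanning_chords k (x - 1) \<union> spanning_chords k y"
  proof (cases rule: Gk_edge_cases[OF ab])
    case 1
    then have "a = y \<and> b = Suc y \<or> a = x - 1 \<and> b = x" using crossing assms(2) by auto
    then show ?thesis using \<open>e = {a, b}\<close> \<open>b < 3 ^ k\<close> unfolding R_def by auto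
  next
    case 2
    then have "y = 3 ^ k - 1" using crossing assms(2,4) by auto
    then show ?thesis using 2 \<open>e = {a, b}\<close> unfolding R_def by simp
  next
    case (3 i m)
    then have "e \<in> chords k" unfolding chords_def chord_def \<open>e = {a, b}\<close> by blast
    from crossing have "a \<le> y \<and> y < b \<or> a \<le> x - 1 \<and> x - 1 < b" using ab(2) assms(2) by auto
    then show ?thesis
      using \<open>e \<in> chords k\<close> \<open>e = {a, b}\<close> unfolding spanning_chords_def by blast
  qed
qed

lemma card_edge_cut_interval:
  assumes "1 \<le> k" "1 \<le> x" "x \<le> y" "y < 3 ^ k"
  shows "card (edge_cut (Gk_edges k) {x..y}) \<le> 2 * k"
proof -
  let ?R = "if y = 3 ^ k - 1 then {0, 3 ^ k - 1} else {y, Suc y}"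
  have "card (edge_cut (Gk_edges k) {x..y})
      \<le> card ({{x - 1, x}, ?R} \<union> spanning_chords k (x - 1) \<union> spanning_chords k y)"
    by (rule card_mono[OF _ edge_cut_interval_subset[OF assms]]) (simp add: finite_spanning_chords)
  also have "\<dots> \<le> card ({{x - 1, x}, ?R} \<union> spanning_chords k (x - 1)) + card (spanning_chords k y)"
    by (rule card_Un_le)
  also have "\<dots> \<le> card {{x - 1, x}, ?R} + card (spanning_chords k (x - 1))
      + card (spanning_chords k y)"
    using card_Un_le[of "{{x - 1, x}, ?R}"] by simp
  also have "\<dots> \<le> 2 + (k - 1) + (k - 1)"
  proof -
    have "card {{x - 1, x}, ?R} \<le> 2" by (simp add: card_insert_if)
    then show ?thesis
      using card_spanning_chords[of k "x - 1"] card_spanning_chords[of k y] by linarith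
  qed
  also have "\<dots> = 2 * k" using assms(1) by simp
  finally show ?thesis .
qed

lemma card_bond_Gk:
  assumes "1 \<le> k" "bond {..<3 ^ k} (Gk_edges k) F"
  shows "card F \<le> 2 * k"
proof -
  let ?V = "{..<(3::nat) ^ k}"
  have G: "simple_graph ?V (Gk_edges k)" "connected_graph ?V (Gk_edges k)"
    using simple_graph_Gk two_connected_Gk two_connected_imp_connected assms(1) by blast+
  obtain T where T: "T \<subseteq> ?V" "T \<noteq> {}" "?V - T \<noteq> {}" "connected_within (Gk_edges k) T"
    "connected_within (Gk_edges k) (?V - T)" "F = edge_cut (Gk_edges k) T"
    using bond_edge_cut[OF G assms(2)] .
  define A where "A = (if 0 \<in> T then ?V - T else T)"
  have "?V - (?V - T) = T" using T(1) by blast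
  then have A: "0 \<notin> A" "A \<noteq> {}" "A \<subseteq> ?V" "connected_within (Gk_edges k) A"
    "connected_within (Gk_edges k) (?V - A)" "F = edge_cut (Gk_edges k) A"
    using T edge_cut_Diff[OF G(1) T(1)] unfolding A_def by (cases "0 \<in> T"; simp)+
  obtain x y where "A = {x..y}" "1 \<le> x" "x \<le> y" "y < 3 ^ k"
    using non_crossing_side_interval[OF non_crossing_Gk[OF assms(1)] A(4,5,3,1,2)] .
  then show ?thesis using A(6) card_edge_cut_interval[OF assms(1)] by simp
qed

section \<open>Pathwidth of $G_k$\<close>

definition block :: "nat \<Rightarrow> nat \<Rightarrow> nat set" where
  "block j m = {m * 3 ^ j ..< (m + 1) * 3 ^ j}"

lemma block_Suc:
  "block (Suc j) m = block j (3 * m) \<union> block j (3 * m + 1) \<union> block j (3 * m + 2)"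
  unfolding block_def by (auto simp: algebra_simps)

lemma block_thirds_disjoint:
  "block j (3 * m) \<inter> block j (3 * m + 1) = {}" "block j (3 * m) \<inter> block j (3 * m + 2) = {}"
  "block j (3 * m + 1) \<inter> block j (3 * m + 2) = {}"
  unfolding block_def by (auto simp: algebra_simps)

lemma block_thirds_Un:
  "block j (3 * m) \<union> block j (3 * m + 1) = {3 * m * 3 ^ j ..< (3 * m + 2) * 3 ^ j}"
  "block j (3 * m + 1) \<union> block j (3 * m + 2) = {(3 * m + 1) * 3 ^ j ..< (3 * m + 3) * 3 ^ j}"
  unfolding block_def by (auto simp: algebra_simps)

lemma block_chord_ends:
  assumes "0 < (t::nat)"
  shows "3 * m * t \<le> (3 * m + 1) * t - 1 \<and> (3 * m + 1) * t - 1 < (3 * m + 1) * t"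
    "(3 * m + 2) * t < (3 * m + 2 + 1) * t"
  using assms by (cases t; auto simp: algebra_simps)+

text \<open>The outer thirds of a block are joined by the chord of that block, or by the closing edge
  of the cycle if the block is the whole vertex set.\<close>
lemma connected_within_Gk_outer_thirds:
  assumes "(3 * m + 3) * 3 ^ j \<le> (3::nat) ^ k"
  shows "connected_within (Gk_edges k) (block j (3 * m) \<union> block j (3 * m + 2))"
proof -
  let ?t = "(3::nat) ^ j"
  have cycle: "cycle_edges (3 ^ k) \<subseteq> Gk_edges k" unfolding Gk_edges_def by blast
  have "(3 * m + 1) * ?t \<le> (3 * m + 3) * ?t" by (intro mult_le_mono1) simp
  then have "(3 * m + 1) * ?t \<le> 3 ^ k" "(3 * m + 3) * ?t \<le> 3 ^ k" using assms by linarith+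
  moreover have "block j (3 * m) = {3 * m * ?t ..< (3 * m + 1) * ?t}"
    "block j (3 * m + 2) = {(3 * m + 2) * ?t ..< (3 * m + 3) * ?t}"
    unfolding block_def by (simp_all add: algebra_simps)
  ultimately have conn: "connected_within (Gk_edges k) (block j (3 * m))"
    "connected_within (Gk_edges k) (block j (3 * m + 2))"
    using connected_within_interval[OF cycle] by simp_all
  have "0 < ?t" by simp
  have "j < k"
  proof (rule ccontr)
    assume "\<not> j < k"
    then have "(3::nat) ^ k \<le> ?t" by (simp add: power_increasing)
    moreover have "3 * ?t \<le> (3 * m + 3) * ?t" by (intro mult_le_mono1) simp
    ultimately show False using assms \<open>0 < ?t\<close> by linarith
  qed
  show ?thesis
  proof (cases "Suc j < k")
    case True
    then have "chord j m \<in> Gk_edges k" using assms unfolding Gk_edges_def chords_def by auto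
    moreover have "(3 * m + 1) * ?t - 1 \<in> block j (3 * m)" "(3 * m + 2) * ?t \<in> block j (3 * m + 2)"
      using block_chord_ends[OF \<open>0 < ?t\<close>] unfolding block_def by simp_all
    ultimately show ?thesis using connected_within_Un[OF conn] unfolding chord_def by blast
  next
    case False
    with \<open>j < k\<close> have "3 ^ k = 3 * ?t" by (metis Suc_lessI power_Suc)
    then have "m = 0" using assms by simp
    have "2 * ?t \<le> 3 * ?t - 1" "3 * ?t - 1 < 3 * ?t" using \<open>0 < ?t\<close> by linarith+
    moreover have "block j (3 * m) = {0 ..< ?t}" "block j (3 * m + 2) = {2 * ?t ..< 3 * ?t}"
      unfolding block_def \<open>m = 0\<close> by (simp_all add: numeral_eq_Suc)
    ultimately have "0 \<in> block j (3 * m)" "3 ^ k - 1 \<in> block j (3 * m + 2)"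
      using \<open>0 < ?t\<close> \<open>3 ^ k = 3 * ?t\<close> by simp_all
    then show ?thesis using connected_within_Un[OF conn] cycle cycle_edge_last by blast
  qed
qed

lemma path_decomp_Gk_block_bag:
  assumes pd: "path_decomp {..<3 ^ k} (Gk_edges k) Xs"
  shows "(m + 1) * 3 ^ j \<le> 3 ^ k \<Longrightarrow> \<exists>i < length Xs. Suc j \<le> card (Xs ! i \<inter> block j m)"
proof (induction j arbitrary: m)
  case 0
  then have "m \<in> {..<3 ^ k}" by simp
  then obtain i where "i < length Xs" "m \<in> Xs ! i" using pd unfolding path_decomp_def by blast
  moreover have "block 0 m = {m}" unfolding block_def by auto
  ultimately show ?case by (intro exI[of _ i]) auto
next
  case (Suc j)
  let ?t = "(3::nat) ^ j"
  have cycle: "cycle_edges (3 ^ k) \<subseteq> Gk_edges k" unfolding Gk_edges_def by blast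
  have top: "(3 * m + 3) * ?t \<le> 3 ^ k" using Suc.prems by (simp add: algebra_simps)
  have "(3 * m + 1) * ?t \<le> (3 * m + 3) * ?t" "(3 * m + 2) * ?t \<le> (3 * m + 3) * ?t"
    by (intro mult_le_mono1; simp)+
  then have le: "(3 * m + 1) * ?t \<le> 3 ^ k" "(3 * m + 2) * ?t \<le> 3 ^ k" using top by linarith+
  have eq: "3 * m + 1 + 1 = 3 * m + 2" "3 * m + 2 + 1 = 3 * m + 3" by simp_all
  obtain i1 where i1: "i1 < length Xs" "Suc j \<le> card (Xs ! i1 \<inter> block j (3 * m))"
    using Suc.IH[of "3 * m", OF le(1)] by blast
  obtain i2 where i2: "i2 < length Xs" "Suc j \<le> card (Xs ! i2 \<inter> block j (3 * m + 1))"
    using Suc.IH[of "3 * m + 1", unfolded eq(1), OF le(2)] by blast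
  obtain i3 where i3: "i3 < length Xs" "Suc j \<le> card (Xs ! i3 \<inter> block j (3 * m + 2))"
    using Suc.IH[of "3 * m + 2", unfolded eq(2), OF top] by blast
  have "connected_within (Gk_edges k) (block j (3 * m) \<union> block j (3 * m + 1))"
    unfolding block_thirds_Un by (rule connected_within_interval[OF cycle le(2)])
  moreover have "connected_within (Gk_edges k) (block j (3 * m + 1) \<union> block j (3 * m + 2))"
    unfolding block_thirds_Un by (rule connected_within_interval[OF cycle top])
  moreover have "connected_within (Gk_edges k) (block j (3 * m) \<union> block j (3 * m + 2))"
    by (rule connected_within_Gk_outer_thirds[OF top])
  moreover have "block (Suc j) m \<subseteq> {..<3 ^ k}" "finite (block (Suc j) m)"
    using Suc.prems unfolding block_def by (auto simp del: power_Suc)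
  ultimately show ?case
    using path_decomp_three_parts[OF pd _ _ block_thirds_disjoint _ _ _ i1 i2 i3]
    unfolding block_Suc by blast
qed

lemma pathwidth_Gk:
  assumes "1 \<le> k"
  shows "k \<le> pathwidth {..<3 ^ k} (Gk_edges k)"
proof (rule pathwidth_geI[OF simple_graph_Gk[OF assms]])
  fix Xs assume pd: "path_decomp {..<3 ^ k} (Gk_edges k) Xs"
  have "block k 0 = {..<3 ^ k}" unfolding block_def by auto
  then obtain i where "i < length Xs" "Suc k \<le> card (Xs ! i \<inter> {..<3 ^ k})"
    using path_decomp_Gk_block_bag[OF pd, of 0 k] by auto
  moreover have "Xs ! i \<subseteq> {..<3 ^ k}" using pd \<open>i < length Xs\<close> unfolding path_decomp_def by simp
  ultimately show "\<exists>X\<in>set Xs. Suc k \<le> card X" by (metis Int_absorb2 nth_mem)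
qed

theorem theorem1p5:
  fixes k :: nat
  assumes "k \<ge> 1"
  shows "\<exists>(V :: nat set) E. simple_graph V E \<and> two_connected V E \<and>
           pathwidth V E \<ge> k \<and> cocircumference V E \<le> 2 * k"
proof (intro exI conjI)
  show "simple_graph {..<3 ^ k} (Gk_edges k)" using simple_graph_Gk[OF assms] .
  show "two_connected {..<3 ^ k} (Gk_edges k)" using two_connected_Gk[OF assms] .
  show "k \<le> pathwidth {..<3 ^ k} (Gk_edges k)" using pathwidth_Gk[OF assms] .
  show "cocircumference {..<3 ^ k} (Gk_edges k) \<le> 2 * k"
    using cocircumference_le[OF simple_graph_Gk[OF assms] card_bond_Gk[OF assms]] .
qed

end
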